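(* Let $\mathcal N$ be a monotonic max-sum $(\mathrm{Col},\delta)$-GNN with $L$ layers and dimensions $\delta_0,\dots,\delta_L$. Then for every $0\le \ell\le L$ and every $1\le i\le \delta_\ell$, the set $X_\ell^i$ satisfies $X_\ell^i\subseteq \mathbb R_{\ge 0}$, and for every $\alpha\in\mathbb R$ the set $X_\ell^i\setminus X_\ell^i{}_{>\alpha}$ is finite, where $X_\ell^i{}_{>\alpha}=\{\alpha'\in X_\ell^i\mid \alpha'>\alpha\}$. (Consequently every nonempty $X_\ell^i{}_{>\alpha}$ has a least element.)
   Context: Graphs and GNNs. For a finite set of colours $\mathrm{Col}$ and $\delta\in\mathbb N$, a $(\mathrm{Col},\delta)$-graph is $G=\langle V,\{E^c\}_{c\in\mathrm{Col}},\lambda\rangle$ where $V$ is a finite set of vertices, $E^c\subseteq V\times V$ for each colour $c$, and $\lambda$ assigns to each $v\in V$ a feature vector $\mathbf v\in\mathbb R^\delta$. A $(\mathrm{Col},\delta)$-GNN $\mathcal N$ with $L\ge 1$ layers consists of dimensions $\delta_0=\delta,\delta_1,\dots,\delta_{L-1},\delta_L=\delta$; real matrices $A_\ell$ and $B_\ell^c$ of size $\delta_\ell\times\delta_{\ell-1}$ and bias vectors $b_\ell\in\mathbb R^{\delta_\ell}$ for $1\le\ell\le L$, $c\in\mathrm{Col}$; aggregation functions $\mathrm{agg}_\ell$ from finite real multisets to $\mathbb R$ (applied componentwise to finite multisets of vectors); an activation function $\sigma:\mathbb R\to\mathbb R$ and a classification function $\mathrm{cls}:\mathbb R\to\{0,1\}$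 (both applied componentwise). Applying $\mathcal N$ to $G$ produces labellings $\lambda_0=\lambda,\lambda_1,\dots,\lambda_L$ where, writing $\mathbf v_\ell$ for the vector of $v$ under $\lambda_\ell$, $\mathbf v_\ell=\sigma\big(A_\ell\mathbf v_{\ell-1}+\sum_{c\in\mathrm{Col}}B_\ell^c\,\mathrm{agg}_\ell(\{\!\{\mathbf u_{\ell-1}\mid (v,u)\in E^c\}\!\})+b_\ell\big)$. Max-sum aggregation. For $k\in\mathbb N_0\cup\{\infty\}$ and a finite real multiset $S$, let $m=\min(k,|S|)$; $\mathrm{maxsum}_k(S)=0$ if $m=0$, and otherwise it is the sum of the $m$ largest elements of $S$, counting multiplicities. Monotonic max-sum GNN: a $(\mathrm{Col},\delta)$-GNN such that (i) all entries of every $A_\ell$ and $B_\ell^c$ are nonnegative; (ii) each $\mathrm{agg}_\ell$ is $\mathrm{maxsum}_{k_\ell}$ for some $k_\ell\in\mathbb N_0\cup\{\infty\}$; (iii) $\sigma$ is monotonically increasing ($x<y\Rightarrow\sigma(x)\le\sigma(y)$), unbounded (for every $y$ there is $x$ with $\sigma(x)>y$), and takes values in $\mathbb R_{\ge0}$ with range $\mathbb R_{\ge 0}$; (iv) $\mathrm{cls}$ is a step function with some threshold $t\in\mathbb R$: $\mathrm{cls}(t')=0$ for $t'<t$ and $\mathrm{cls}(t')=1$ for $t'\ge t$. Sets $X_\ell^i$. A $(\mathrm{Col},\ell)$-multiset family $\mathcal Y$ assigns to each $c\in\mathrm{Col}$ a finite multiset $\mathcal Y^c$ of vectors of dimension $\delta_\ell$.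 For $1\le\ell\le L$, $1\le i\le\delta_\ell$, a vector $\mathbf x$ of dimension $\delta_{\ell-1}$ and a $(\mathrm{Col},\ell-1)$-multiset family $\mathcal Y$, let $\mathrm{Val}_\ell^i(\mathbf x,\mathcal Y)$ be the $i$-th component of $A_\ell\mathbf x+\sum_{c}B_\ell^c\,\mathrm{maxsum}_{k_\ell}(\mathcal Y^c)+b_\ell$. Define $X_0^i=\{0,1\}$ for $1\le i\le\delta_0$, and for $\ell\ge1$ let $X_\ell^i$ be the set of all values $\sigma(\mathrm{Val}_\ell^i(\mathbf x,\mathcal Y))$ where $\mathbf x$ ranges over vectors of dimension $\delta_{\ell-1}$ with $x_j\in X_{\ell-1}^j$ for all $j$, and $\mathcal Y$ ranges over $(\mathrm{Col},\ell-1)$-multiset families such that $y_j\in X_{\ell-1}^j$ for all $c$, all $\mathbf y\in\mathcal Y^c$ and all $j$. *)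

theory Defs
  imports Main "HOL-Library.Multiset" "HOL-Library.Extended_Nat"
begin

definition maxsum :: "enat \<Rightarrow> real multiset \<Rightarrow> real" where
  "maxsum k S = (if k = \<infinity> then sum_mset S
                 else sum_list (take (the_enat k) (rev (sorted_list_of_multiset S))))"

(* Layers are numbered 1..nL; vectors of dimension d are functions nat => real,
   only components 0..d-1 being relevant (component i corresponds to i+1 in the paper).
   Amat l i j = (A_l)_{ij}, Bmat l c i j = (B^c_l)_{ij}, bias l i = (b_l)_i.
   cls is the step function with threshold thr. *)
record 'c gnn =
  nL :: nat
  dim :: "nat \<Rightarrow> nat"
  Amat :: "nat \<Rightarrow> nat \<Rightarrow> nat \<Rightarrow> real"
  Bmat :: "nat \<Rightarrow> 'c \<Rightarrow> nat \<Rightarrow> nat \<Rightarrow> real"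
  bias :: "nat \<Rightarrow> nat \<Rightarrow> real"
  aggk :: "nat \<Rightarrow> enat"
  act :: "real \<Rightarrow> real"
  thr :: real

definition cls :: "'c gnn \<Rightarrow> real \<Rightarrow> real" where
  "cls N t' = (if t' < thr N then 0 else 1)"

definition monotonic_maxsum_gnn :: "'c set \<Rightarrow> nat \<Rightarrow> 'c gnn \<Rightarrow> bool" where
  "monotonic_maxsum_gnn Col \<delta> N \<longleftrightarrow>
     finite Col \<and> nL N \<ge> 1 \<and> dim N 0 = \<delta> \<and> dim N (nL N) = \<delta> \<and>
     (\<forall>l i j. 1 \<le> l \<and> l \<le> nL N \<and> i < dim N l \<and> j < dim N (l - 1) \<longrightarrow>
        Amat N l i j \<ge> 0 \<and> (\<forall>c\<in>Col. Bmat N l c i j \<ge> 0)) \<and>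
     (\<forall>x y. x < y \<longrightarrow> act N x \<le> act N y) \<and>
     (\<forall>y. \<exists>x. act N x > y) \<and>
     range (act N) = {0..}"

definition Val :: "'c set \<Rightarrow> 'c gnn \<Rightarrow> nat \<Rightarrow> nat \<Rightarrow> (nat \<Rightarrow> real)
                   \<Rightarrow> ('c \<Rightarrow> (nat \<Rightarrow> real) multiset) \<Rightarrow> real" where
  "Val Col N l i x Y =
     (\<Sum>j<dim N (l - 1). Amat N l i j * x j)
     + (\<Sum>c\<in>Col. \<Sum>j<dim N (l - 1).
          Bmat N l c i j * maxsum (aggk N l) (image_mset (\<lambda>y. y j) (Y c)))
     + bias N l i"

fun Xset :: "'c set \<Rightarrow> 'c gnn \<Rightarrow> nat \<Rightarrow> nat \<Rightarrow> real set" where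
  "Xset Col N 0 i = {0, 1}"
| "Xset Col N (Suc l) i =
     {act N (Val Col N (Suc l) i x Y) | x Y.
        (\<forall>j < dim N l. x j \<in> Xset Col N l j) \<and>
        (\<forall>c\<in>Col. \<forall>y\<in>#Y c. \<forall>j < dim N l. y j \<in> Xset Col N l j)}"

end

theory Submission
  imports Defs "HOL-Library.Set_Algebras"
begin

text \<open>
  Call a set of reals lower-finite if only finitely many of its elements lie below any bound.
  Among nonnegative sets this property survives scaling by nonnegative factors, translation,
  Minkowski sums (a summand of a nonnegative sum is at most the sum) and images under monotone
  unbounded maps. A max-sum aggregate is a combination of elements of the previous layer's set
  with natural-number coefficients, so it too ranges over a lower-finite set. Induction over
  the layers then shows that every \<open>Xset Col N l i\<close> is nonnegative and lower-finite.
\<close>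

definition lower_finite :: "real set \<Rightarrow> bool" where
  "lower_finite S \<longleftrightarrow> (\<forall>\<beta>. finite {s \<in> S. s \<le> \<beta>})"

lemma lower_finite_subset:
  assumes "lower_finite T" "S \<subseteq> T"
  shows "lower_finite S"
  unfolding lower_finite_def
proof
  fix \<beta>
  have "{s \<in> S. s \<le> \<beta>} \<subseteq> {s \<in> T. s \<le> \<beta>}" using assms(2) by blast
  then show "finite {s \<in> S. s \<le> \<beta>}"
    by (rule finite_subset) (use assms(1) in \<open>simp add: lower_finite_def\<close>)
qed

lemma lower_finite_has_least:
  assumes "lower_finite S" "a0 \<in> S"
  shows "\<exists>m \<in> S. \<forall>a \<in> S. m \<le> a"
proof -
  define F where "F = {s \<in> S. s \<le> a0}"
  have F: "finite F" "a0 \<in> F" using assms unfolding lower_finite_def F_def by auto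
  have "Min F \<le> a" if "a \<in> S" for a
  proof (cases "a \<le> a0")
    case True
    then show ?thesis using F that by (intro Min_le) (auto simp: F_def)
  next
    case False
    then show ?thesis using Min_le[OF F] by linarith
  qed
  moreover have "Min F \<in> S" using Min_in[of F] F unfolding F_def by auto
  ultimately show ?thesis by blast
qed

lemma lower_finite_of_nat: "lower_finite (range of_nat)"
  unfolding lower_finite_def
proof
  fix \<beta> :: real
  have "{s \<in> range of_nat. s \<le> \<beta>} \<subseteq> of_nat ` {..nat \<lceil>\<beta>\<rceil>}"
    by (auto simp: image_iff le_nat_iff) linarith
  then show "finite {s \<in> range of_nat. s \<le> \<beta>}" by (rule finite_subset) simp
qed

lemma lower_finite_elt_set_times:
  assumes "c \<ge> 0" "lower_finite S"
  shows "lower_finite (c *o S)"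
proof (cases "c = 0")
  case True
  then have "c *o S \<subseteq> {0}" by (auto simp: elt_set_times_def)
  then show ?thesis by (rule lower_finite_subset[rotated]) (simp add: lower_finite_def)
next
  case False
  with assms(1) have "c > 0" by simp
  show ?thesis unfolding lower_finite_def
  proof
    fix \<beta>
    have "{z \<in> c *o S. z \<le> \<beta>} \<subseteq> (*) c ` {s \<in> S. s \<le> \<beta> / c}"
      using \<open>c > 0\<close> by (auto simp: elt_set_times_def pos_le_divide_eq mult.commute)
    then show "finite {z \<in> c *o S. z \<le> \<beta>}"
      by (rule finite_subset) (use assms(2) in \<open>simp add: lower_finite_def\<close>)
  qed
qed

lemma lower_finite_elt_set_plus:
  assumes "lower_finite S"
  shows "lower_finite (b +o S)"
  unfolding lower_finite_def
proof
  fix \<beta>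
  have "{z \<in> b +o S. z \<le> \<beta>} \<subseteq> (+) b ` {s \<in> S. s \<le> \<beta> - b}"
    by (auto simp: elt_set_plus_def)
  then show "finite {z \<in> b +o S. z \<le> \<beta>}"
    by (rule finite_subset) (use assms in \<open>simp add: lower_finite_def\<close>)
qed

lemma lower_finite_set_plus:
  assumes "S \<subseteq> {0..}" "T \<subseteq> {0..}" "lower_finite S" "lower_finite T"
  shows "lower_finite (S + T)"
  unfolding lower_finite_def
proof
  fix \<beta>
  have "{z \<in> S + T. z \<le> \<beta>} \<subseteq> {s \<in> S. s \<le> \<beta>} + {t \<in> T. t \<le> \<beta>}"
    using assms(1,2) by (fastforce elim!: set_plus_elim)
  then show "finite {z \<in> S + T. z \<le> \<beta>}"
    by (rule finite_subset) (use assms(3,4) in \<open>simp add: lower_finite_def finite_set_plus\<close>)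
qed

lemma set_plus_nonneg: "S \<subseteq> {0..} \<Longrightarrow> T \<subseteq> {0..} \<Longrightarrow> S + T \<subseteq> ({0..} :: real set)"
  by (fastforce elim!: set_plus_elim)

lemma elt_set_times_nonneg: "c \<ge> 0 \<Longrightarrow> S \<subseteq> {0..} \<Longrightarrow> c *o S \<subseteq> ({0..} :: real set)"
  by (auto simp: elt_set_times_def)

lemma set_sum_nonneg:
  "(\<And>i. i \<in> I \<Longrightarrow> F i \<subseteq> {0..}) \<Longrightarrow> sum F I \<subseteq> ({0..} :: real set)"
  by (induction I rule: infinite_finite_induct) (simp_all add: set_plus_nonneg)

lemma lower_finite_set_sum:
  assumes "\<And>i. i \<in> I \<Longrightarrow> F i \<subseteq> {0..}" "\<And>i. i \<in> I \<Longrightarrow> lower_finite (F i)"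
  shows "lower_finite (sum F I)"
  using assms
proof (induction I rule: infinite_finite_induct)
  case (insert i I)
  then show ?case
    by (simp add: lower_finite_set_plus set_sum_nonneg)
qed (auto simp: lower_finite_def)

lemma sum_in_set_sum: "(\<And>i. i \<in> I \<Longrightarrow> f i \<in> F i) \<Longrightarrow> sum f I \<in> sum F I"
  by (cases "finite I") (auto simp: set_sum_alt)

lemma lower_finite_image_mono:
  assumes "mono f" "\<And>y. \<exists>x. f x > y" "lower_finite S"
  shows "lower_finite (f ` S)"
  unfolding lower_finite_def
proof
  fix \<beta>
  obtain x0 where "f x0 > \<beta>" using assms(2) by blast
  have "s \<le> x0" if "f s \<le> \<beta>" for s
    using that \<open>f x0 > \<beta>\<close> monoD[OF assms(1), of x0 s] by fastforce
  then have "{y \<in> f ` S. y \<le> \<beta>} \<subseteq> f ` {s \<in> S. s \<le> x0}" by auto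
  then show "finite {y \<in> f ` S. y \<le> \<beta>}"
    by (rule finite_subset) (use assms(3) in \<open>simp add: lower_finite_def\<close>)
qed

lemma sum_mset_nonneg:
  fixes M :: "'a :: ordered_comm_monoid_add multiset"
  shows "(\<And>x. x \<in># M \<Longrightarrow> 0 \<le> x) \<Longrightarrow> 0 \<le> sum_mset M"
  by (induction M) auto

lemma member_le_sum_mset:
  fixes M :: "'a :: ordered_comm_monoid_add multiset"
  assumes "x \<in># M" "\<And>y. y \<in># M \<Longrightarrow> 0 \<le> y"
  shows "x \<le> sum_mset M"
proof -
  obtain M' where M: "M = add_mset x M'" using assms(1) by (metis multi_member_split)
  have "0 \<le> sum_mset M'" using assms(2) by (intro sum_mset_nonneg) (simp add: M)
  then show ?thesis using M by (simp add: add_increasing2)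
qed

lemma sum_mset_eq_sum_count:
  fixes M :: "'a :: comm_semiring_1 multiset"
  assumes "finite T" "set_mset M \<subseteq> T"
  shows "sum_mset M = (\<Sum>t\<in>T. of_nat (count M t) * t)"
  using assms(2)
proof (induction M)
  case (add x M)
  then have "(\<Sum>t\<in>T. of_nat (count (add_mset x M) t) * t)
             = (\<Sum>t\<in>T. of_nat (count M t) * t + (if t = x then x else 0))"
    by (intro sum.cong) (auto simp: algebra_simps)
  also have "\<dots> = (\<Sum>t\<in>T. of_nat (count M t) * t) + x"
    using add.prems assms(1) by (simp add: sum.distrib)
  finally show ?case using add by (simp add: add.commute)
qed simp

text \<open>A multiset of nonnegative elements with sum at most \<open>\<beta>\<close> draws its elements from the
  finite set \<open>T\<close> of elements at most \<open>\<beta>\<close>, so its sum is a natural-number combination of \<open>T\<close>.\<close>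

lemma lower_finite_sum_mset:
  assumes "S \<subseteq> {0..}" "lower_finite S"
  shows "lower_finite {sum_mset M | M. set_mset M \<subseteq> S}"
  unfolding lower_finite_def
proof
  fix \<beta>
  define T where "T = {s \<in> S. s \<le> \<beta>}"
  define G where "G = (\<Sum>t\<in>T. t *o range of_nat)"
  have "finite T" using assms(2) unfolding lower_finite_def T_def by blast
  have "lower_finite G"
    unfolding G_def using assms(1) T_def
    by (intro lower_finite_set_sum lower_finite_elt_set_times elt_set_times_nonneg
        lower_finite_of_nat) auto
  moreover have "{z \<in> {sum_mset M | M. set_mset M \<subseteq> S}. z \<le> \<beta>} \<subseteq> {z \<in> G. z \<le> \<beta>}"
  proof safe
    fix M assume M: "set_mset M \<subseteq> S" "sum_mset M \<le> \<beta>"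
    have "set_mset M \<subseteq> T"
      using M assms(1) member_le_sum_mset[of _ M] unfolding T_def by fastforce
    then have "sum_mset M = (\<Sum>t\<in>T. t * of_nat (count M t))"
      using sum_mset_eq_sum_count[OF \<open>finite T\<close>] by (simp add: mult.commute)
    also have "\<dots> \<in> G" unfolding G_def by (intro sum_in_set_sum set_times_intro2) simp
    finally show "sum_mset M \<in> G" .
  qed
  ultimately show "finite {z \<in> {sum_mset M | M. set_mset M \<subseteq> S}. z \<le> \<beta>}"
    unfolding lower_finite_def by (meson finite_subset)
qed

lemma maxsum_eq_sum_mset_subset: "\<exists>M'. M' \<subseteq># M \<and> maxsum k M = sum_mset M'"
proof (cases "k = \<infinity>")
  case False
  let ?xs = "rev (sorted_list_of_multiset M)"
  have "mset (take (the_enat k) ?xs) \<subseteq># M"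
    by (metis append_take_drop_id mset_append mset_rev mset_sorted_list_of_multiset
        mset_subset_eq_add_left)
  moreover have "maxsum k M = sum_mset (mset (take (the_enat k) ?xs))"
    unfolding maxsum_def if_not_P[OF False] by (simp add: sum_mset_sum_list)
  ultimately show ?thesis by blast
qed (auto simp: maxsum_def)

lemma maxsum_nonneg:
  assumes "set_mset M \<subseteq> {0..}"
  shows "maxsum k M \<ge> 0"
proof -
  obtain M' where "M' \<subseteq># M" "maxsum k M = sum_mset M'"
    using maxsum_eq_sum_mset_subset by blast
  then show ?thesis
    using assms by (metis atLeast_iff mset_subset_eqD subsetD sum_mset_nonneg)
qed

lemma lower_finite_maxsum:
  assumes "S \<subseteq> {0..}" "lower_finite S"
  shows "lower_finite {maxsum k M | M. set_mset M \<subseteq> S}"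
proof (rule lower_finite_subset[OF lower_finite_sum_mset[OF assms]])
  show "{maxsum k M | M. set_mset M \<subseteq> S} \<subseteq> {sum_mset M | M. set_mset M \<subseteq> S}"
    using maxsum_eq_sum_mset_subset[where k = k] by (fastforce dest: mset_subset_eqD)
qed

lemma Xset_nonneg:
  assumes "monotonic_maxsum_gnn Col \<delta> N"
  shows "Xset Col N l i \<subseteq> {0..}"
proof (cases l)
  case (Suc l')
  have "Xset Col N (Suc l') i \<subseteq> range (act N)" by auto
  with assms Suc show ?thesis by (simp add: monotonic_maxsum_gnn_def)
qed simp

lemma Xset_Suc_subset:
  "Xset Col N (Suc l) i \<subseteq> act N ` (bias N (Suc l) i +o
     ((\<Sum>j<dim N l. Amat N (Suc l) i j *o Xset Col N l j) +
      (\<Sum>c\<in>Col. \<Sum>j<dim N l. Bmat N (Suc l) c i j *o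
         {maxsum (aggk N (Suc l)) M | M. set_mset M \<subseteq> Xset Col N l j})))"
  (is "_ \<subseteq> act N ` ?V")
proof
  fix a assume "a \<in> Xset Col N (Suc l) i"
  then obtain x Y where a: "a = act N (Val Col N (Suc l) i x Y)"
    and x: "\<forall>j < dim N l. x j \<in> Xset Col N l j"
    and Y: "\<forall>c\<in>Col. \<forall>y\<in>#Y c. \<forall>j < dim N l. y j \<in> Xset Col N l j" by auto
  have "Val Col N (Suc l) i x Y = bias N (Suc l) i +
          ((\<Sum>j<dim N l. Amat N (Suc l) i j * x j) +
           (\<Sum>c\<in>Col. \<Sum>j<dim N l. Bmat N (Suc l) c i j *
              maxsum (aggk N (Suc l)) (image_mset (\<lambda>y. y j) (Y c))))"
    by (simp add: Val_def)
  also have "\<dots> \<in> ?V"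
    using x Y by (intro set_plus_intro2 set_plus_intro sum_in_set_sum set_times_intro2) fastforce+
  finally show "a \<in> act N ` ?V" using a by blast
qed

lemma lower_finite_Xset:
  assumes mon: "monotonic_maxsum_gnn Col \<delta> N"
  shows "l \<le> nL N \<Longrightarrow> i < dim N l \<Longrightarrow> lower_finite (Xset Col N l i)"
proof (induction l arbitrary: i)
  case 0
  then show ?case by (simp add: lower_finite_def)
next
  case (Suc l)
  let ?X = "Xset Col N l"
  let ?MV = "\<lambda>j. {maxsum (aggk N (Suc l)) M | M. set_mset M \<subseteq> ?X j}"
  have X: "?X j \<subseteq> {0..}" "lower_finite (?X j)" if "j < dim N l" for j
    using Xset_nonneg[OF mon] Suc that by auto
  have MV: "?MV j \<subseteq> {0..}" "lower_finite (?MV j)" if "j < dim N l" for j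
    using X[OF that] maxsum_nonneg lower_finite_maxsum by auto
  have A: "Amat N (Suc l) i j \<ge> 0" and B: "c \<in> Col \<Longrightarrow> Bmat N (Suc l) c i j \<ge> 0"
    if "j < dim N l" for j c
    using mon Suc.prems that unfolding monotonic_maxsum_gnn_def by auto
  have act_mono: "x < y \<Longrightarrow> act N x \<le> act N y" and act_unbounded: "\<exists>x. act N x > y"
    for x y using mon unfolding monotonic_maxsum_gnn_def by auto
  have "mono (act N)"
    by (rule monoI) (metis act_mono order_le_less order_refl)
  moreover have "lower_finite (bias N (Suc l) i +o
     ((\<Sum>j<dim N l. Amat N (Suc l) i j *o ?X j) +
      (\<Sum>c\<in>Col. \<Sum>j<dim N l. Bmat N (Suc l) c i j *o ?MV j)))"
    using X MV A B
    by (intro lower_finite_elt_set_plus lower_finite_set_plus set_sum_nonneg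
        lower_finite_set_sum elt_set_times_nonneg lower_finite_elt_set_times) auto
  ultimately have "lower_finite (act N ` (bias N (Suc l) i +o
     ((\<Sum>j<dim N l. Amat N (Suc l) i j *o ?X j) +
      (\<Sum>c\<in>Col. \<Sum>j<dim N l. Bmat N (Suc l) c i j *o ?MV j))))"
    by (rule lower_finite_image_mono[OF _ act_unbounded])
  then show ?case by (rule lower_finite_subset[OF _ Xset_Suc_subset])
qed

theorem theorem1:
  fixes Col :: "'c set" and \<delta> :: nat and N :: "'c gnn"
  assumes "monotonic_maxsum_gnn Col \<delta> N"
    and "l \<le> nL N" and "i < dim N l"
  shows "Xset Col N l i \<subseteq> {0..} \<and>
         (\<forall>\<alpha>::real. finite (Xset Col N l i - {a \<in> Xset Col N l i. a > \<alpha>})) \<and>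
         (\<forall>\<alpha>::real. {a \<in> Xset Col N l i. a > \<alpha>} \<noteq> {} \<longrightarrow>
            (\<exists>m \<in> {a \<in> Xset Col N l i. a > \<alpha>}. \<forall>a \<in> {a \<in> Xset Col N l i. a > \<alpha>}. m \<le> a))"
proof -
  let ?X = "Xset Col N l i"
  have fin: "lower_finite ?X" using lower_finite_Xset assms by blast
  have "finite (?X - {a \<in> ?X. a > \<alpha>})" for \<alpha>
  proof -
    have "?X - {a \<in> ?X. a > \<alpha>} = {a \<in> ?X. a \<le> \<alpha>}" by auto
    then show ?thesis using fin by (simp add: lower_finite_def)
  qed
  moreover have "\<exists>m \<in> {a \<in> ?X. a > \<alpha>}. \<forall>a \<in> {a \<in> ?X. a > \<alpha>}. m \<le> a"
    if nonempty: "{a \<in> ?X. a > \<alpha>} \<noteq> {}" for \<alpha>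
  proof -
    obtain a0 where a0: "a0 \<in> {a \<in> ?X. a > \<alpha>}" using nonempty by blast
    have "lower_finite {a \<in> ?X. a > \<alpha>}" by (rule lower_finite_subset[OF fin]) blast
    then show ?thesis using a0 by (rule lower_finite_has_least)
  qed
  ultimately show ?thesis using Xset_nonneg[OF assms(1)] by blast
qed

end
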